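(* Let $X\subset\mathbb{R}^n$ be amenable at $\bar x\in X$. Then $X$ is nearly convex at $\bar x$ (and hence nearly radial at $\bar x$).
   Context: The tangent cone is $T_X(x)=\{\lim t_r^{-1}(x_r-x):t_r\downarrow0,\ x_r\to x,\ x_r\in X\}$. $X$ is nearly convex at $\bar x$ if $\operatorname{dist}(y,x+T_X(x))=o(\|x-y\|)$ as $x,y\to\bar x$ in $X$. $X$ is nearly radial at $\bar x$ if $\operatorname{dist}(\bar x,x+T_X(x))=o(\|x-\bar x\|)$ as $x\to\bar x$ in $X$. $X$ is amenable at $\bar x$ if there exist an open neighbourhood $V$ of $\bar x$, a $C^1$ map $F:V\to\mathbb{R}^m$ and a closed convex set $D\subset\mathbb{R}^m$ with $X\cap V=\{x\in V:F(x)\in D\}$ and $N_D(F(\bar x))\cap\ker(\nabla F(\bar x)^* )=\{0\}$, where $N_D$ is the normal cone of convex analysis to $D$ and $\nabla F(\bar x)^*$ the adjoint of the Jacobian. *)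

theory Defs
  imports "HOL-Analysis.Analysis"
begin

definition tangent_cone :: "'a::real_normed_vector set \<Rightarrow> 'a \<Rightarrow> 'a set" where
  "tangent_cone X x = {v. \<exists>t xs. (\<forall>r. t r > 0) \<and> t \<longlonglongrightarrow> 0 \<and>
      (\<forall>r. xs r \<in> X) \<and> xs \<longlonglongrightarrow> x \<and>
      (\<lambda>r. (1 / t r) *\<^sub>R (xs r - x)) \<longlonglongrightarrow> v}"

definition nearly_convex :: "'a::real_normed_vector set \<Rightarrow> 'a \<Rightarrow> bool" where
  "nearly_convex X xbar \<longleftrightarrow>
     (\<forall>\<epsilon>>0. \<exists>\<delta>>0. \<forall>x\<in>X. \<forall>y\<in>X. dist x xbar < \<delta> \<and> dist y xbar < \<delta> \<longrightarrow>
        infdist y ((\<lambda>v. x + v) ` tangent_cone X x) \<le> \<epsilon> * norm (x - y))"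

definition nearly_radial :: "'a::real_normed_vector set \<Rightarrow> 'a \<Rightarrow> bool" where
  "nearly_radial X xbar \<longleftrightarrow>
     (\<forall>\<epsilon>>0. \<exists>\<delta>>0. \<forall>x\<in>X. dist x xbar < \<delta> \<longrightarrow>
        infdist xbar ((\<lambda>v. x + v) ` tangent_cone X x) \<le> \<epsilon> * norm (x - xbar))"

definition normal_cone_convex :: "'b::real_inner set \<Rightarrow> 'b \<Rightarrow> 'b set" where
  "normal_cone_convex D y = {w. \<forall>d\<in>D. inner w (d - y) \<le> 0}"

text \<open>Amenability of X at xbar, with the target space R^m represented by the
  euclidean space type 'b (given by the TYPE argument).\<close>
definition amenable :: "'b::euclidean_space itself \<Rightarrow> 'a::euclidean_space set \<Rightarrow> 'a \<Rightarrow> bool" where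
  "amenable _ X xbar \<longleftrightarrow>
     (\<exists>V (F :: 'a \<Rightarrow> 'b) (F' :: 'a \<Rightarrow> 'a \<Rightarrow>\<^sub>L 'b) (D :: 'b set).
        open V \<and> xbar \<in> V \<and>
        (\<forall>x\<in>V. (F has_derivative blinfun_apply (F' x)) (at x)) \<and> continuous_on V F' \<and>
        closed D \<and> convex D \<and>
        X \<inter> V = {x\<in>V. F x \<in> D} \<and>
        (\<forall>w. w \<in> normal_cone_convex D (F xbar) \<and> (\<forall>h. inner w (F' xbar h) = 0) \<longrightarrow> w = 0))"

end

theory Submission
  imports Defs
begin

(* By compactness the qualification holds
      uniformly at points near xbar and normals at points of D near F xbar; hence the function
      \<phi> = dist(F(.), D) has slope at least c > 0 at every infeasible point near xbar.  A
      minimisation argument (a finite-dimensional Ekeland principle) turns this slope bound into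
      the error bound dist(z, X) \<le> \<kappa> dist(F z, D) near xbar.
   2. Chords are almost tangent.  For x, y \<in> X near xbar and w = y - x, convexity of D places
      F x + t(F y - F x) in D, so F(x + t w) is within o(t) + t \<eta> |w| of D, where \<eta> bounds the
      variation of \<nabla>F near xbar.  The error bound yields points of X within that distance
      (times \<kappa>) of x + t w, and a compactness argument produces a tangent vector v at x with
      |v - w| \<le> \<kappa> \<eta> |w|.  This is near convexity; near radiality is its special case y = xbar. *)


lemma tangent_cone_zero:
  fixes X :: "'a::real_normed_vector set"
  assumes "x \<in> X"
  shows "0 \<in> tangent_cone X x"
proof -
  have "(\<forall>r. 1 / real (Suc r) > 0) \<and> (\<lambda>r. 1 / real (Suc r)) \<longlonglongrightarrow> 0 \<and>
      (\<forall>r. (\<lambda>r. x) r \<in> X) \<and> (\<lambda>r. x) \<longlonglongrightarrow> x \<and>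
      (\<lambda>r. (1 / (1 / real (Suc r))) *\<^sub>R ((\<lambda>r. x) r - x)) \<longlonglongrightarrow> 0"
    using assms LIMSEQ_Suc[OF lim_1_over_n] by simp
  then show ?thesis unfolding tangent_cone_def by (intro CollectI exI)
qed

lemma tangent_cone_approx:
  fixes X :: "'a::{real_normed_vector,heine_borel} set"
  assumes t_pos: "\<And>k. t k > 0" and t_lim: "t \<longlonglongrightarrow> 0"
    and p_in: "\<And>k. p k \<in> X" and r_lim: "r \<longlonglongrightarrow> 0"
    and p_close: "\<And>k. norm ((1 / t k) *\<^sub>R (p k - x) - w) \<le> r k + c"
  shows "\<exists>v\<in>tangent_cone X x. norm (v - w) \<le> c"
proof -
  define q where "q k = (1 / t k) *\<^sub>R (p k - x)" for k
  obtain B where B: "\<And>k. norm (r k) \<le> B"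
    using r_lim convergent_imp_Bseq convergentI Bseq_def by metis
  have "norm (q k) \<le> norm w + (B + c)" for k
  proof -
    have "norm (q k) \<le> norm w + norm (q k - w)" using norm_triangle_ineq[of w "q k - w"] by simp
    also have "norm (q k - w) \<le> B + c" using p_close[of k] B[of k] by (simp add: q_def)
    finally show ?thesis by simp
  qed
  then have "bounded (range q)" by (intro boundedI) blast
  then obtain v \<sigma> where \<sigma>: "strict_mono \<sigma>" and q_lim: "(\<lambda>k. q (\<sigma> k)) \<longlonglongrightarrow> v"
    using bounded_imp_convergent_subsequence unfolding comp_def by metis
  have t_lim': "(\<lambda>k. t (\<sigma> k)) \<longlonglongrightarrow> 0" and r_lim': "(\<lambda>k. r (\<sigma> k)) \<longlonglongrightarrow> 0"
    using LIMSEQ_subseq_LIMSEQ[OF t_lim \<sigma>] LIMSEQ_subseq_LIMSEQ[OF r_lim \<sigma>] by (simp_all add: o_def)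
  have "p k = x + t k *\<^sub>R q k" for k
    using t_pos[of k] by (simp add: q_def)
  then have p_lim: "(\<lambda>k. p (\<sigma> k)) \<longlonglongrightarrow> x"
    using tendsto_add[OF tendsto_const[of x] tendsto_scaleR[OF t_lim' q_lim]] by simp
  have "(\<forall>k. t (\<sigma> k) > 0) \<and> (\<lambda>k. t (\<sigma> k)) \<longlonglongrightarrow> 0 \<and> (\<forall>k. p (\<sigma> k) \<in> X) \<and>
      (\<lambda>k. p (\<sigma> k)) \<longlonglongrightarrow> x \<and> (\<lambda>k. (1 / t (\<sigma> k)) *\<^sub>R (p (\<sigma> k) - x)) \<longlonglongrightarrow> v"
    using t_pos t_lim' p_in p_lim q_lim by (simp add: q_def)
  then have "v \<in> tangent_cone X x" unfolding tangent_cone_def by (intro CollectI exI)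
  moreover have "norm (v - w) \<le> 0 + c"
  proof (rule LIMSEQ_le)
    show "(\<lambda>k. norm (q (\<sigma> k) - w)) \<longlonglongrightarrow> norm (v - w)" by (intro tendsto_intros q_lim)
    show "(\<lambda>k. r (\<sigma> k) + c) \<longlonglongrightarrow> 0 + c" by (intro tendsto_intros r_lim')
    show "\<exists>N. \<forall>k\<ge>N. norm (q (\<sigma> k) - w) \<le> r (\<sigma> k) + c" using p_close by (simp add: q_def)
  qed
  ultimately show ?thesis by auto
qed

lemma nearly_convex_imp_nearly_radial:
  assumes "xbar \<in> X" and "nearly_convex X xbar"
  shows "nearly_radial X xbar"
  unfolding nearly_radial_def
proof (intro allI impI)
  fix \<epsilon> :: real assume "\<epsilon> > 0"
  then obtain \<delta> where "\<delta> > 0" and "\<forall>x\<in>X. \<forall>y\<in>X. dist x xbar < \<delta> \<and> dist y xbar < \<delta> \<longrightarrow>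
        infdist y ((\<lambda>v. x + v) ` tangent_cone X x) \<le> \<epsilon> * norm (x - y)"
    using assms(2) unfolding nearly_convex_def by blast
  then show "\<exists>\<delta>>0. \<forall>x\<in>X. dist x xbar < \<delta> \<longrightarrow>
        infdist xbar ((\<lambda>v. x + v) ` tangent_cone X x) \<le> \<epsilon> * norm (x - xbar)"
    using assms(1) by auto
qed

lemma nearest_point_normal:
  fixes D :: "'b::euclidean_space set"
  assumes "convex D" "closed D" "d \<in> D" "dist y d = infdist y D"
  shows "sgn (y - d) \<in> normal_cone_convex D d"
  unfolding normal_cone_convex_def
proof (intro CollectI ballI)
  fix e assume "e \<in> D"
  have "\<forall>e\<in>D. dist y d \<le> dist y e" using assms(4) infdist_le by metis
  then have "inner (y - d) (e - d) \<le> 0"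
    using any_closest_point_dot[OF assms(1-3) \<open>e \<in> D\<close>] by blast
  then show "inner (sgn (y - d)) (e - d) \<le> 0"
    using mult_nonneg_nonpos[of "inverse (norm (y - d))"] by (simp add: sgn_div_norm)
qed

lemma normal_cone_convex_limit:
  fixes D :: "'b::real_inner set"
  assumes "\<And>k. n k \<in> normal_cone_convex D (d k)" and "n \<longlonglongrightarrow> n0" and "d \<longlonglongrightarrow> d0"
  shows "n0 \<in> normal_cone_convex D d0"
  unfolding normal_cone_convex_def
proof (intro CollectI ballI)
  fix e assume e: "e \<in> D"
  have "(\<lambda>k. inner (n k) (e - d k)) \<longlonglongrightarrow> inner n0 (e - d0)"
    by (intro tendsto_intros assms(2,3))
  moreover have "\<And>k. inner (n k) (e - d k) \<le> 0"
    using assms(1) e unfolding normal_cone_convex_def by blast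
  ultimately show "inner n0 (e - d0) \<le> 0" by (intro LIMSEQ_le_const2[where a=0]) auto
qed

lemma nonpos_on_unit_sphere_imp_zero:
  fixes L :: "'a::real_normed_vector \<Rightarrow> 'b::real_inner"
  assumes lin: "linear L" and nonpos: "\<And>h. norm h = 1 \<Longrightarrow> inner n (L h) \<le> 0"
  shows "inner n (L h) = 0"
proof (cases "h = 0")
  case True
  then show ?thesis using linear_0[OF lin] by simp
next
  case False
  have "inner n (L (sgn h)) \<le> 0" and "inner n (L (- sgn h)) \<le> 0"
    using nonpos False by (simp_all add: norm_sgn)
  then have "inner n (L (sgn h)) = 0" by (simp add: linear_neg[OF lin])
  moreover have "h = norm h *\<^sub>R sgn h" using False by (simp add: sgn_div_norm)
  ultimately show ?thesis by (metis linear_scale[OF lin] inner_scaleR_right mult_zero_right)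
qed

lemma norm_descent:
  fixes F :: "'a::real_normed_vector \<Rightarrow> 'b::real_inner"
  assumes deriv: "(F has_derivative L) (at u)" and ne: "F u \<noteq> d"
    and steep: "c < inner (sgn (F u - d)) (L h)"
  shows "\<exists>\<delta>>0. \<forall>t. 0 < t \<and> t < \<delta> \<longrightarrow> norm (F (u - t *\<^sub>R h) - d) + c * t < norm (F u - d)"
proof -
  have lin: "linear L" using deriv has_derivative_linear by blast
  define g where "g t = norm (F (u - t *\<^sub>R h) - d) + c * t" for t
  have ray: "((\<lambda>t. u - t *\<^sub>R h) has_derivative (\<lambda>s. - (s *\<^sub>R h))) (at 0)"
    by (auto intro!: derivative_eq_intros)
  have "((\<lambda>t. F (u - t *\<^sub>R h) - d) has_derivative (\<lambda>s. L (- (s *\<^sub>R h)))) (at 0)"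
    using has_derivative_diff[OF has_derivative_compose[OF ray] has_derivative_const[of d]] deriv
    by simp
  moreover have "(norm has_derivative (\<lambda>y. inner y (sgn (F u - d)))) (at (F (u - 0 *\<^sub>R h) - d))"
    using has_derivative_norm[of "F u - d"] ne by simp
  ultimately have "((\<lambda>t. norm (F (u - t *\<^sub>R h) - d)) has_derivative
      (\<lambda>s. inner (L (- (s *\<^sub>R h))) (sgn (F u - d)))) (at 0)"
    using has_derivative_compose by fastforce
  then have "(g has_derivative (\<lambda>s. (c - inner (sgn (F u - d)) (L h)) * s)) (at 0)"
    unfolding g_def
    by (rule has_derivative_eq_rhs[OF has_derivative_add[OF _ has_derivative_mult_right[OF has_derivative_ident]]])
       (auto simp: linear_neg[OF lin] linear_scale[OF lin] inner_commute algebra_simps)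
  then have "DERIV g 0 :> c - inner (sgn (F u - d)) (L h)"
    by (simp add: has_field_derivative_def)
  then obtain \<delta> where "\<delta> > 0" and "\<And>t. t > 0 \<Longrightarrow> t < \<delta> \<Longrightarrow> g 0 > g (0 + t)"
    using DERIV_neg_dec_right steep by (metis diff_less_0_iff_less)
  then show ?thesis by (auto simp: g_def)
qed

lemma linearization_bound:
  fixes F :: "'a::real_normed_vector \<Rightarrow> 'b::real_normed_vector"
  assumes "convex S" "x \<in> S" "y \<in> S"
    and deriv: "\<And>u. u \<in> S \<Longrightarrow> (F has_derivative blinfun_apply (F' u)) (at u)"
    and var: "\<And>u. u \<in> S \<Longrightarrow> norm (F' u - F' x) \<le> \<eta>"
  shows "norm (F y - F x - F' x (y - x)) \<le> \<eta> * norm (y - x)"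
proof -
  have "norm (F y - F x - F' x (y - x)) \<le> norm (y - x) * \<eta>"
  proof (rule differentiable_bound_linearization[where S=S and f'="\<lambda>u. blinfun_apply (F' u)"])
    fix t :: real assume "t \<in> {0..1}"
    then have "(1 - t) *\<^sub>R x + t *\<^sub>R y \<in> S"
      using convexD[OF assms(1-3), of "1 - t" t] by simp
    then show "x + t *\<^sub>R (y - x) \<in> S" by (simp add: algebra_simps)
  next
    fix u assume "u \<in> S"
    then show "(F has_derivative blinfun_apply (F' u)) (at u within S)"
      using deriv has_derivative_at_withinI by blast
    show "onorm (blinfun_apply (F' u) - blinfun_apply (F' x)) \<le> \<eta>"
      using var[OF \<open>u \<in> S\<close>] by (simp add: norm_blinfun.rep_eq minus_blinfun.rep_eq fun_diff_def)
  qed (use assms in auto)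
  then show ?thesis by (simp add: mult.commute)
qed

(* If F x and F y lie in the convex set D, then F moves away from D along the chord
   x + t(y - x) no more than the linearisation errors allow: the comparison point
   F x + t(F y - F x) of D is reached up to these errors. *)
lemma chord_infdist_bound:
  fixes F :: "'a::real_normed_vector \<Rightarrow> 'b::real_normed_vector"
  assumes "convex D" "F x \<in> D" "F y \<in> D" "linear L" "0 \<le> t" "t \<le> 1"
  shows "infdist (F (x + t *\<^sub>R (y - x))) D
           \<le> norm (F (x + t *\<^sub>R (y - x)) - F x - L (t *\<^sub>R (y - x))) + t * norm (F y - F x - L (y - x))"
    (is "infdist ?Fz D \<le> norm ?e + t * norm ?r")
proof -
  define p where "p = (1 - t) *\<^sub>R F x + t *\<^sub>R F y"
  have "p \<in> D"
    using convexD[OF assms(1-3), of "1 - t" t] assms(5,6) by (simp add: p_def)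
  then have "infdist ?Fz D \<le> dist ?Fz p" by (rule infdist_le)
  also have eq: "?Fz - p = ?e - t *\<^sub>R ?r"
    unfolding p_def linear_scale[OF assms(4)] by (simp add: algebra_simps)
  have "dist ?Fz p = norm (?e - t *\<^sub>R ?r)" by (simp only: dist_norm eq)
  also have "\<dots> \<le> norm ?e + t * norm ?r" using norm_triangle_ineq4[of ?e "t *\<^sub>R ?r"] assms(5) by simp
  finally show ?thesis .
qed

lemma remainder_vanishes_along_ray:
  fixes F :: "'a::real_normed_vector \<Rightarrow> 'b::real_normed_vector"
  assumes deriv: "(F has_derivative L) (at x)" and "w \<noteq> 0"
    and t_pos: "\<And>k. t k > 0" and t_lim: "t \<longlonglongrightarrow> 0"
  shows "(\<lambda>k. norm (F (x + t k *\<^sub>R w) - F x - L (t k *\<^sub>R w)) / t k) \<longlonglongrightarrow> 0"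
proof -
  define z where "z k = x + t k *\<^sub>R w" for k
  have rel: "((\<lambda>z. norm (F z - F x - L (z - x)) / norm (z - x)) \<longlongrightarrow> 0) (at x)"
    using deriv has_derivative_iff_norm by blast
  have "z \<longlonglongrightarrow> x"
    using tendsto_add[OF tendsto_const[of x] tendsto_scaleR[OF t_lim tendsto_const[of w]]]
    by (simp add: z_def[abs_def])
  moreover have "\<forall>k. z k \<noteq> x" using t_pos \<open>w \<noteq> 0\<close> by (simp add: z_def) (metis less_irrefl)
  ultimately have "filterlim z (at x) sequentially"
    by (intro filterlim_atI always_eventually)
  from filterlim_compose[OF rel this]
  have "(\<lambda>k. norm w * (norm (F (z k) - F x - L (z k - x)) / norm (z k - x))) \<longlonglongrightarrow> norm w * 0"
    by (intro tendsto_mult tendsto_const) (simp add: o_def)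
  moreover have "norm w * (norm (F (z k) - F x - L (z k - x)) / norm (z k - x))
      = norm (F (x + t k *\<^sub>R w) - F x - L (t k *\<^sub>R w)) / t k" for k
    using t_pos[of k] \<open>w \<noteq> 0\<close> by (simp add: z_def)
  ultimately show ?thesis by simp
qed

(* The zero is obtained by minimising \<phi> + \<alpha> dist(., z). *)
lemma zero_near_point_of_uniform_slope:
  fixes \<phi> :: "'a::euclidean_space \<Rightarrow> real"
  assumes cont: "continuous_on (cball z R) \<phi>"
    and nonneg: "\<And>v. v \<in> cball z R \<Longrightarrow> 0 \<le> \<phi> v"
    and "\<alpha> > 0" and "R > 0" and small: "\<phi> z < \<alpha> * R"
    and slope: "\<And>u. u \<in> ball z R \<Longrightarrow> \<phi> u > 0 \<Longrightarrow>
        \<exists>h. norm h = 1 \<and> (\<exists>\<delta>>0. \<forall>t. 0 < t \<and> t < \<delta> \<longrightarrow> \<phi> (u - t *\<^sub>R h) + \<alpha> * t < \<phi> u)"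
  shows "\<exists>u. dist z u \<le> \<phi> z / \<alpha> \<and> \<phi> u = 0"
proof -
  define \<psi> where "\<psi> v = \<phi> v + \<alpha> * dist v z" for v
  have "continuous_on (cball z R) \<psi>"
    unfolding \<psi>_def by (intro continuous_intros cont)
  moreover have "cball z R \<noteq> {}" using \<open>R > 0\<close> by simp
  ultimately obtain u where u_in: "u \<in> cball z R" and u_min: "\<And>v. v \<in> cball z R \<Longrightarrow> \<psi> u \<le> \<psi> v"
    using continuous_attains_inf[OF compact_cball] by metis
  have z_in: "z \<in> cball z R" using \<open>R > 0\<close> by simp
  have "\<alpha> * dist u z \<le> \<phi> z"
    using u_min[OF z_in] nonneg[OF u_in] by (simp add: \<psi>_def)
  then have close: "dist z u \<le> \<phi> z / \<alpha>"
    using \<open>\<alpha> > 0\<close> by (simp add: field_simps dist_commute)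
  have "\<alpha> * dist u z < \<alpha> * R" using \<open>\<alpha> * dist u z \<le> \<phi> z\<close> small by linarith
  then have inside: "dist u z < R" using \<open>\<alpha> > 0\<close> by simp
  have "\<phi> u = 0"
  proof (rule ccontr)
    assume "\<phi> u \<noteq> 0"
    then have "\<phi> u > 0" using nonneg[OF u_in] by simp
    then obtain h \<delta> where h: "norm h = 1" and "\<delta> > 0"
      and descent: "\<And>t. 0 < t \<Longrightarrow> t < \<delta> \<Longrightarrow> \<phi> (u - t *\<^sub>R h) + \<alpha> * t < \<phi> u"
      using slope inside by (fastforce simp: dist_commute)
    define t where "t = min (\<delta>/2) ((R - dist u z)/2)"
    have "0 < t" using \<open>\<delta> > 0\<close> inside by (simp add: t_def)
    moreover have "t \<le> \<delta>/2" "t \<le> (R - dist u z)/2" unfolding t_def by (rule min.cobounded1, rule min.cobounded2)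
    ultimately have t: "0 < t" "t < \<delta>" "dist u z + t < R" using \<open>\<delta> > 0\<close> inside by (simp_all add: field_simps)
    have "dist (u - t *\<^sub>R h) z \<le> dist u z + t"
      using dist_triangle[of "u - t *\<^sub>R h" z u] h t(1) by (simp add: dist_norm)
    then have "\<psi> (u - t *\<^sub>R h) \<le> \<phi> (u - t *\<^sub>R h) + \<alpha> * t + \<alpha> * dist u z"
      using \<open>\<alpha> > 0\<close> by (simp add: \<psi>_def distrib_left[symmetric])
    also have "\<dots> < \<psi> u" using descent[OF t(1,2)] by (simp add: \<psi>_def)
    finally have "\<psi> (u - t *\<^sub>R h) < \<psi> u" .
    moreover have "u - t *\<^sub>R h \<in> cball z R"
      using \<open>dist (u - t *\<^sub>R h) z \<le> dist u z + t\<close> t(3) by (simp add: dist_commute)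
    ultimately show False using u_min by fastforce
  qed
  with close show ?thesis by blast
qed


locale amenable_representation =
  fixes X :: "'a::euclidean_space set" and xbar :: 'a and V :: "'a set"
    and F :: "'a \<Rightarrow> 'b::euclidean_space" and F' :: "'a \<Rightarrow> 'a \<Rightarrow>\<^sub>L 'b" and D :: "'b set"
  assumes xbar_in_X: "xbar \<in> X" and open_V: "open V" and xbar_in_V: "xbar \<in> V"
    and deriv_F: "\<And>x. x \<in> V \<Longrightarrow> (F has_derivative blinfun_apply (F' x)) (at x)"
    and cont_F': "continuous_on V F'"
    and closed_D: "closed D" and convex_D: "convex D"
    and X_local: "X \<inter> V = {x\<in>V. F x \<in> D}"
    and qualification: "\<And>w. w \<in> normal_cone_convex D (F xbar) \<Longrightarrow>
        (\<forall>h. inner w (F' xbar h) = 0) \<Longrightarrow> w = 0"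
begin

lemma F_xbar_in_D: "F xbar \<in> D"
  using X_local xbar_in_X xbar_in_V by blast

lemma isCont_F': "isCont F' xbar"
  using cont_F' open_V xbar_in_V continuous_on_eq_continuous_at by blast

lemma continuous_on_F: "continuous_on V F"
  using deriv_F by (intro continuous_at_imp_continuous_on ballI has_derivative_continuous) blast

lemma isCont_F: "isCont F xbar"
  using continuous_on_F open_V xbar_in_V continuous_on_eq_continuous_at by blast

lemma uniform_qualification:
  "\<exists>c>0. \<exists>r>0. \<forall>u d n. dist u xbar \<le> r \<longrightarrow> d \<in> D \<longrightarrow> dist d (F xbar) \<le> r \<longrightarrow>
      n \<in> normal_cone_convex D d \<longrightarrow> norm n = 1 \<longrightarrow> (\<exists>h. norm h = 1 \<and> inner n (F' u h) \<ge> c)"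
proof (rule ccontr)
  assume "\<not> ?thesis"
  then have "\<forall>k::nat. \<exists>u d n. dist u xbar \<le> 1 / real (Suc k) \<and> d \<in> D \<and>
      dist d (F xbar) \<le> 1 / real (Suc k) \<and> n \<in> normal_cone_convex D d \<and> norm n = 1 \<and>
      (\<forall>h. norm h = 1 \<longrightarrow> inner n (F' u h) < 1 / real (Suc k))"
    by (metis not_le of_nat_0_less_iff zero_less_Suc zero_less_divide_1_iff)
  then obtain u d n where
    u: "\<And>k. dist (u k) xbar \<le> 1 / real (Suc k)"
    and d: "\<And>k. dist (d k) (F xbar) \<le> 1 / real (Suc k)"
    and n_normal: "\<And>k. n k \<in> normal_cone_convex D (d k)" and n_unit: "\<And>k. norm (n k) = 1"
    and n_slope: "\<And>k h. norm h = 1 \<Longrightarrow> inner (n k) (F' (u k) h) < 1 / real (Suc k)"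
    by metis
  have "bounded (range n)" using n_unit by (auto intro!: boundedI[of _ 1])
  then obtain n0 \<sigma> where \<sigma>: "strict_mono \<sigma>" and n_lim: "(\<lambda>k. n (\<sigma> k)) \<longlonglongrightarrow> n0"
    using bounded_imp_convergent_subsequence unfolding comp_def by metis
  have inv_lim: "(\<lambda>k. 1 / real (Suc (\<sigma> k))) \<longlonglongrightarrow> 0"
    using LIMSEQ_subseq_LIMSEQ[OF LIMSEQ_Suc[OF lim_1_over_n] \<sigma>] by (simp add: o_def)
  have "(\<lambda>k. dist (u (\<sigma> k)) xbar) \<longlonglongrightarrow> 0" and "(\<lambda>k. dist (d (\<sigma> k)) (F xbar)) \<longlonglongrightarrow> 0"
    using Lim_null_comparison[of "\<lambda>k. dist (u (\<sigma> k)) xbar" "\<lambda>k. 1 / real (Suc (\<sigma> k))"]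
      Lim_null_comparison[of "\<lambda>k. dist (d (\<sigma> k)) (F xbar)" "\<lambda>k. 1 / real (Suc (\<sigma> k))"]
      inv_lim u d by simp_all
  then have "(\<lambda>k. u (\<sigma> k)) \<longlonglongrightarrow> xbar" and "(\<lambda>k. d (\<sigma> k)) \<longlonglongrightarrow> F xbar"
    using tendsto_dist_iff by blast+
  note limits = n_lim this
  have "norm n0 = 1"
    using tendsto_norm[OF n_lim] n_unit LIMSEQ_unique[OF _ tendsto_const] by simp
  moreover have "n0 \<in> normal_cone_convex D (F xbar)"
    by (rule normal_cone_convex_limit[where n="\<lambda>k. n (\<sigma> k)" and d="\<lambda>k. d (\<sigma> k)"])
      (use n_normal limits in auto)
  moreover have "\<forall>h. inner n0 (F' xbar h) = 0"
  proof
    fix h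
    show "inner n0 (F' xbar h) = 0"
    proof (rule nonpos_on_unit_sphere_imp_zero[where L="blinfun_apply (F' xbar)"])
      show "linear (blinfun_apply (F' xbar))"
        by (simp add: blinfun.bounded_linear_right bounded_linear.linear)
      fix e :: 'a assume "norm e = 1"
      have "(\<lambda>k. inner (n (\<sigma> k)) (F' (u (\<sigma> k)) e) - 1 / real (Suc (\<sigma> k))) \<longlonglongrightarrow> inner n0 (F' xbar e) - 0"
        using isCont_tendsto_compose[OF isCont_F' limits(2)]
        by (intro tendsto_intros limits inv_lim bounded_bilinear.tendsto[OF bounded_bilinear_blinfun_apply])
      moreover have "\<And>k. inner (n (\<sigma> k)) (F' (u (\<sigma> k)) e) - 1 / real (Suc (\<sigma> k)) \<le> 0"
        using n_slope[OF \<open>norm e = 1\<close>] by (simp add: less_imp_le)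
      ultimately show "inner n0 (F' xbar e) \<le> 0"
        using LIMSEQ_le_const2[where a=0] by fastforce
    qed
  qed
  ultimately show False using qualification by fastforce
qed

(* The infeasibility measure dist(F(.), D) has slope at least c at every infeasible point near
   xbar: the nearest point of D supplies a unit normal, and the uniform qualification supplies
   a direction along which F moves against this normal. *)
lemma infeasibility_slope:
  "\<exists>c>0. \<exists>r>0. \<forall>u. dist u xbar < r \<longrightarrow> F u \<notin> D \<longrightarrow>
     (\<exists>h. norm h = 1 \<and> (\<exists>\<delta>>0. \<forall>t. 0 < t \<and> t < \<delta> \<longrightarrow>
        infdist (F (u - t *\<^sub>R h)) D + c * t < infdist (F u) D))"
proof -
  obtain c r where "c > 0" "r > 0" and qual: "\<And>u d n. dist u xbar \<le> r \<Longrightarrow> d \<in> D \<Longrightarrow>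
      dist d (F xbar) \<le> r \<Longrightarrow> n \<in> normal_cone_convex D d \<Longrightarrow> norm n = 1 \<Longrightarrow>
      \<exists>h. norm h = 1 \<and> inner n (F' u h) \<ge> c"
    using uniform_qualification by blast
  obtain r1 where "r1 > 0" and ball_V: "ball xbar r1 \<subseteq> V"
    using open_V xbar_in_V open_contains_ball by blast
  obtain r2 where "r2 > 0" and F_close: "\<And>u. dist u xbar < r2 \<Longrightarrow> dist (F u) (F xbar) < r/2"
    using isCont_F \<open>r > 0\<close> unfolding continuous_at_eps_delta by (metis half_gt_zero)
  define s where "s = min r (min r1 r2)"
  have "\<exists>h. norm h = 1 \<and> (\<exists>\<delta>>0. \<forall>t. 0 < t \<and> t < \<delta> \<longrightarrow>
      infdist (F (u - t *\<^sub>R h)) D + c/2 * t < infdist (F u) D)"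
    if u: "dist u xbar < s" and infeasible: "F u \<notin> D" for u
  proof -
    have "u \<in> V" using u ball_V by (auto simp: s_def dist_commute)
    obtain d where "d \<in> D" and nearest: "infdist (F u) D = dist (F u) d"
      using infdist_attains_inf[OF closed_D] F_xbar_in_D by blast
    have "dist (F u) d \<le> dist (F u) (F xbar)"
      using infdist_le[OF F_xbar_in_D, of "F u"] nearest by simp
    moreover have "dist (F u) (F xbar) < r/2" using F_close u by (simp add: s_def)
    ultimately have "dist d (F xbar) \<le> r"
      using dist_triangle[of d "F xbar" "F u"] by (simp add: dist_commute)
    moreover have "sgn (F u - d) \<in> normal_cone_convex D d"
      using nearest_point_normal[OF convex_D closed_D \<open>d \<in> D\<close>] nearest by simp
    moreover have "norm (sgn (F u - d)) = 1" using infeasible \<open>d \<in> D\<close> by (auto simp: norm_sgn)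
    moreover have "dist u xbar \<le> r" using u by (simp add: s_def)
    ultimately obtain h where "norm h = 1" and "inner (sgn (F u - d)) (F' u h) \<ge> c"
      using qual \<open>d \<in> D\<close> by blast
    then have "c/2 < inner (sgn (F u - d)) (F' u h)" using \<open>c > 0\<close> by simp
    from norm_descent[OF deriv_F[OF \<open>u \<in> V\<close>] _ this] obtain \<delta> where "\<delta> > 0"
      and descent: "\<And>t. 0 < t \<Longrightarrow> t < \<delta> \<Longrightarrow> norm (F (u - t *\<^sub>R h) - d) + c/2 * t < norm (F u - d)"
      using infeasible \<open>d \<in> D\<close> by blast
    have "infdist (F (u - t *\<^sub>R h)) D + c/2 * t < infdist (F u) D" if "0 < t" "t < \<delta>" for t
      using infdist_le[OF \<open>d \<in> D\<close>, of "F (u - t *\<^sub>R h)"] descent[OF that] nearest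
      by (simp add: dist_norm)
    with \<open>norm h = 1\<close> \<open>\<delta> > 0\<close> show ?thesis by blast
  qed
  moreover have "c/2 > 0" "s > 0" using \<open>c > 0\<close> \<open>r > 0\<close> \<open>r1 > 0\<close> \<open>r2 > 0\<close> by (simp_all add: s_def)
  ultimately show ?thesis by blast
qed

lemma feasible_point_near:
  assumes "c > 0" and ball_V: "ball xbar s \<subseteq> V"
    and slope: "\<And>u. u \<in> ball xbar s \<Longrightarrow> F u \<notin> D \<Longrightarrow>
      \<exists>h. norm h = 1 \<and> (\<exists>\<delta>>0. \<forall>t. 0 < t \<and> t < \<delta> \<longrightarrow>
        infdist (F (u - t *\<^sub>R h)) D + c * t < infdist (F u) D)"
    and z: "dist z xbar < s/2" and small: "infdist (F z) D < c * (s/2)"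
  shows "\<exists>p\<in>X. dist z p \<le> infdist (F z) D / c"
proof -
  define \<phi> where "\<phi> v = infdist (F v) D" for v
  have "s > 0" using z zero_le_dist[of z xbar] by linarith
  have near: "cball z (s/2) \<subseteq> ball xbar s"
  proof
    fix v assume "v \<in> cball z (s/2)"
    then show "v \<in> ball xbar s" using z dist_triangle[of xbar v z] by (simp add: dist_commute)
  qed
  then have near_V: "cball z (s/2) \<subseteq> V" using ball_V by blast
  have "continuous_on (cball z (s/2)) \<phi>"
    unfolding \<phi>_def by (intro continuous_on_infdist continuous_on_subset[OF continuous_on_F near_V])
  moreover have "\<exists>h. norm h = 1 \<and> (\<exists>\<delta>>0. \<forall>t. 0 < t \<and> t < \<delta> \<longrightarrow> \<phi> (u - t *\<^sub>R h) + c * t < \<phi> u)"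
    if "u \<in> ball z (s/2)" "\<phi> u > 0" for u
  proof -
    have "u \<in> ball xbar s" using that(1) near ball_subset_cball[of z "s/2"] by blast
    moreover have "F u \<notin> D" using that(2) by (auto simp: \<phi>_def)
    ultimately show ?thesis using slope by (simp add: \<phi>_def)
  qed
  ultimately obtain u where u_close: "dist z u \<le> \<phi> z / c" and "\<phi> u = 0"
    using zero_near_point_of_uniform_slope[of z "s/2" \<phi> c] small \<open>c > 0\<close> \<open>s > 0\<close>
    by (auto simp: \<phi>_def infdist_nonneg)
  have "\<phi> z / c < s/2"
    using small \<open>c > 0\<close> by (simp add: \<phi>_def pos_divide_less_eq mult.commute)
  then have "dist z u \<le> s/2" using u_close by linarith
  then have "u \<in> V" using near_V by auto
  moreover have "F u \<in> D"
    using \<open>\<phi> u = 0\<close> in_closed_iff_infdist_zero[OF closed_D] F_xbar_in_D by (auto simp: \<phi>_def)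
  ultimately have "u \<in> X" using X_local by blast
  with u_close show ?thesis by (auto simp: \<phi>_def)
qed

lemma error_bound:
  "\<exists>\<kappa>>0. \<exists>\<rho>>0. \<forall>z. dist z xbar < \<rho> \<longrightarrow> (\<exists>p\<in>X. dist z p \<le> \<kappa> * infdist (F z) D)"
proof -
  obtain c r where "c > 0" "r > 0" and slope: "\<And>u. dist u xbar < r \<Longrightarrow> F u \<notin> D \<Longrightarrow>
      \<exists>h. norm h = 1 \<and> (\<exists>\<delta>>0. \<forall>t. 0 < t \<and> t < \<delta> \<longrightarrow>
        infdist (F (u - t *\<^sub>R h)) D + c * t < infdist (F u) D)"
    using infeasibility_slope by blast
  obtain r1 where "r1 > 0" and ball_V: "ball xbar r1 \<subseteq> V"
    using open_V xbar_in_V open_contains_ball by blast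
  define s where "s = min r r1"
  have "s > 0" using \<open>r > 0\<close> \<open>r1 > 0\<close> by (simp add: s_def)
  have "ball xbar s \<subseteq> V" using ball_V by (auto simp: s_def)
  moreover have "dist u xbar < r" if "u \<in> ball xbar s" for u
    using that by (simp add: s_def dist_commute)
  ultimately have regular: "\<exists>p\<in>X. dist z p \<le> infdist (F z) D / c"
    if "dist z xbar < s/2" "infdist (F z) D < c * (s/2)" for z
    using feasible_point_near[OF \<open>c > 0\<close> _ slope that] by blast
  obtain \<rho>1 where "\<rho>1 > 0" and F_close: "\<And>z. dist z xbar < \<rho>1 \<Longrightarrow> dist (F z) (F xbar) < c * (s/2)"
    using isCont_F \<open>c > 0\<close> \<open>s > 0\<close> unfolding continuous_at_eps_delta
    by (metis half_gt_zero mult_pos_pos)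
  have "\<exists>p\<in>X. dist z p \<le> (1/c) * infdist (F z) D" if z: "dist z xbar < min (s/2) \<rho>1" for z
  proof -
    have "infdist (F z) D < c * (s/2)"
      using infdist_le[OF F_xbar_in_D, of "F z"] F_close[of z] z by simp
    then show ?thesis using regular z by simp
  qed
  moreover have "1/c > 0" "min (s/2) \<rho>1 > 0" using \<open>c > 0\<close> \<open>s > 0\<close> \<open>\<rho>1 > 0\<close> by simp_all
  ultimately show ?thesis by blast
qed

(* For x, y \<in> X \<inter> S
   and t \<in> (0,1], the point x + t(y - x) is within t \<eta> |y - x| + o(t) of D in the image of
   F, hence within \<kappa> times that of X. *)
lemma chord_point_near_X:
  assumes "\<kappa> > 0" and regular: "\<And>z. z \<in> S \<Longrightarrow> \<exists>p\<in>X. dist z p \<le> \<kappa> * infdist (F z) D"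
    and "convex S" "S \<subseteq> V" and var: "\<And>u. u \<in> S \<Longrightarrow> norm (F' u - F' x) \<le> \<eta>"
    and "x \<in> X" "y \<in> X" "x \<in> S" "y \<in> S" and "0 < t" "t \<le> 1"
  shows "\<exists>p\<in>X. norm ((1 / t) *\<^sub>R (p - x) - (y - x))
            \<le> \<kappa> * (norm (F (x + t *\<^sub>R (y - x)) - F x - F' x (t *\<^sub>R (y - x))) / t)
              + \<kappa> * \<eta> * norm (y - x)"
proof -
  define w where "w = y - x"
  define z where "z = x + t *\<^sub>R w"
  define rem where "rem = norm (F z - F x - F' x (t *\<^sub>R w))"
  have "F x \<in> D" "F y \<in> D" using assms(4,6-9) X_local by blast+
  have "(1 - t) *\<^sub>R x + t *\<^sub>R y \<in> S" using convexD[OF \<open>convex S\<close> \<open>x \<in> S\<close> \<open>y \<in> S\<close>, of "1 - t" t] assms(10,11) by simp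
  then have "z \<in> S" by (simp add: z_def w_def algebra_simps)
  then obtain p where "p \<in> X" and p_close: "dist z p \<le> \<kappa> * infdist (F z) D"
    using regular by blast
  have lin_err: "norm (F y - F x - F' x w) \<le> \<eta> * norm w"
    unfolding w_def using assms(3-5,8,9) deriv_F by (intro linearization_bound) auto
  have lin: "linear (blinfun_apply (F' x))"
    by (simp add: blinfun.bounded_linear_right bounded_linear.linear)
  have "infdist (F z) D \<le> rem + t * norm (F y - F x - F' x w)"
    using chord_infdist_bound[OF convex_D \<open>F x \<in> D\<close> \<open>F y \<in> D\<close> lin, of t] assms(10,11)
    by (simp add: rem_def z_def w_def)
  also have "\<dots> \<le> rem + t * (\<eta> * norm w)"
    using mult_left_mono[OF lin_err, of t] assms(10) by simp
  finally have bound: "dist z p \<le> \<kappa> * (rem + t * (\<eta> * norm w))"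
    using p_close mult_left_mono[of _ _ \<kappa>] \<open>\<kappa> > 0\<close> by (meson less_imp_le order_trans)
  have "(1 / t) *\<^sub>R (p - x) - w = (1 / t) *\<^sub>R (p - z)"
    using \<open>0 < t\<close> by (simp add: z_def algebra_simps)
  then have "norm ((1 / t) *\<^sub>R (p - x) - w) = dist p z / t"
    using \<open>0 < t\<close> by (simp add: dist_norm)
  also have "\<dots> \<le> \<kappa> * (rem + t * (\<eta> * norm w)) / t"
    using bound \<open>0 < t\<close> by (simp add: divide_right_mono dist_commute)
  also have "\<dots> = \<kappa> * (rem / t) + \<kappa> * \<eta> * norm w"
    using \<open>0 < t\<close> by (simp add: field_simps)
  finally show ?thesis using \<open>p \<in> X\<close> by (auto simp: rem_def z_def w_def)
qed

(* Letting t \<down> 0 in the previous lemma: the chord y - x is within \<kappa> \<eta> |y - x| of a tangent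
   vector to X at x. *)
lemma tangent_vector_near_chord:
  assumes "\<kappa> > 0" and regular: "\<And>z. z \<in> S \<Longrightarrow> \<exists>p\<in>X. dist z p \<le> \<kappa> * infdist (F z) D"
    and "convex S" "S \<subseteq> V" and var: "\<And>u. u \<in> S \<Longrightarrow> norm (F' u - F' x) \<le> \<eta>"
    and "x \<in> X" "y \<in> X" "x \<in> S" "y \<in> S"
  shows "\<exists>v\<in>tangent_cone X x. norm (v - (y - x)) \<le> \<kappa> * \<eta> * norm (y - x)"
proof (cases "x = y")
  case True
  then show ?thesis using tangent_cone_zero[OF \<open>x \<in> X\<close>] by force
next
  case False
  define t where "t k = 1 / real (Suc k)" for k
  have t_pos: "t k > 0" and t_le: "t k \<le> 1" for k by (simp_all add: t_def)
  have t_lim: "t \<longlonglongrightarrow> 0" unfolding t_def by (rule LIMSEQ_Suc[OF lim_1_over_n])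
  define rem where "rem k = norm (F (x + t k *\<^sub>R (y - x)) - F x - F' x (t k *\<^sub>R (y - x)))" for k
  have "\<forall>k. \<exists>p\<in>X. norm ((1 / t k) *\<^sub>R (p - x) - (y - x)) \<le> \<kappa> * (rem k / t k) + \<kappa> * \<eta> * norm (y - x)"
    using chord_point_near_X[OF assms, of "t _"] t_pos t_le by (simp add: rem_def)
  then obtain p where p_in: "\<And>k. p k \<in> X"
    and approx: "\<And>k. norm ((1 / t k) *\<^sub>R (p k - x) - (y - x)) \<le> \<kappa> * (rem k / t k) + \<kappa> * \<eta> * norm (y - x)"
    by metis
  have "x \<in> V" using assms(4,8) by blast
  then have rem_lim: "(\<lambda>k. \<kappa> * (rem k / t k)) \<longlonglongrightarrow> 0"
    using remainder_vanishes_along_ray[OF deriv_F _ t_pos t_lim] False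
    unfolding rem_def by (intro tendsto_mult_right_zero) simp
  show ?thesis
    using tangent_cone_approx[where p=p and t=t, OF t_pos t_lim p_in rem_lim approx] .
qed

lemma chord_near_tangent:
  assumes "\<epsilon> > 0"
  shows "\<exists>\<delta>>0. \<forall>x\<in>X. \<forall>y\<in>X. dist x xbar < \<delta> \<longrightarrow> dist y xbar < \<delta> \<longrightarrow>
           (\<exists>v\<in>tangent_cone X x. norm (v - (y - x)) \<le> \<epsilon> * norm (y - x))"
proof -
  obtain \<kappa> \<rho> where "\<kappa> > 0" "\<rho> > 0"
    and regular: "\<And>z. dist z xbar < \<rho> \<Longrightarrow> \<exists>p\<in>X. dist z p \<le> \<kappa> * infdist (F z) D"
    using error_bound by blast
  define \<eta> where "\<eta> = \<epsilon> / \<kappa>"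
  have "\<eta> > 0" using \<open>\<epsilon> > 0\<close> \<open>\<kappa> > 0\<close> by (simp add: \<eta>_def)
  obtain r1 where "r1 > 0" and ball_V: "ball xbar r1 \<subseteq> V"
    using open_V xbar_in_V open_contains_ball by blast
  obtain r2 where "r2 > 0" and F'_close: "\<And>u. dist u xbar < r2 \<Longrightarrow> dist (F' u) (F' xbar) < \<eta>/2"
    using isCont_F' \<open>\<eta> > 0\<close> unfolding continuous_at_eps_delta by (metis half_gt_zero)
  define \<delta> where "\<delta> = min \<rho> (min r1 r2)"
  define S where "S = ball xbar \<delta>"
  have S_V: "S \<subseteq> V" using ball_V by (auto simp: S_def \<delta>_def)
  have S_regular: "\<exists>p\<in>X. dist z p \<le> \<kappa> * infdist (F z) D" if "z \<in> S" for z
  proof -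
    have "dist z xbar < \<rho>" using that by (simp add: S_def \<delta>_def dist_commute)
    then show ?thesis by (rule regular)
  qed
  have S_var: "norm (F' u - F' x) \<le> \<eta>" if "u \<in> S" "x \<in> S" for u x
  proof -
    have "norm (F' u - F' x) \<le> dist (F' u) (F' xbar) + dist (F' x) (F' xbar)"
      using dist_triangle2[of "F' u" "F' x" "F' xbar"] by (simp add: dist_norm)
    also have "\<dots> \<le> \<eta>"
      using F'_close[of u] F'_close[of x] that by (simp add: S_def \<delta>_def dist_commute)
    finally show ?thesis .
  qed
  have "\<exists>v\<in>tangent_cone X x. norm (v - (y - x)) \<le> \<epsilon> * norm (y - x)"
    if "x \<in> X" "y \<in> X" "x \<in> S" "y \<in> S" for x y
    using tangent_vector_near_chord[OF \<open>\<kappa> > 0\<close> S_regular convex_ball[of xbar \<delta>, folded S_def]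
        S_V S_var that] that \<open>\<kappa> > 0\<close> by (simp add: \<eta>_def)
  moreover have "\<delta> > 0" using \<open>\<rho> > 0\<close> \<open>r1 > 0\<close> \<open>r2 > 0\<close> by (simp add: \<delta>_def)
  ultimately show ?thesis unfolding S_def by (metis mem_ball dist_commute)
qed

lemma nearly_convex_at_xbar: "nearly_convex X xbar"
  unfolding nearly_convex_def
proof (intro allI impI)
  fix \<epsilon> :: real assume "\<epsilon> > 0"
  then obtain \<delta> where "\<delta> > 0" and chord: "\<forall>x\<in>X. \<forall>y\<in>X. dist x xbar < \<delta> \<longrightarrow> dist y xbar < \<delta> \<longrightarrow>
      (\<exists>v\<in>tangent_cone X x. norm (v - (y - x)) \<le> \<epsilon> * norm (y - x))"
    using chord_near_tangent by blast
  have "infdist y ((\<lambda>v. x + v) ` tangent_cone X x) \<le> \<epsilon> * norm (x - y)"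
    if xy: "x \<in> X" "y \<in> X" "dist x xbar < \<delta>" "dist y xbar < \<delta>" for x y
  proof -
    obtain v where "v \<in> tangent_cone X x" and v_close: "norm (v - (y - x)) \<le> \<epsilon> * norm (y - x)"
      using chord xy by blast
    then have "infdist y ((\<lambda>v. x + v) ` tangent_cone X x) \<le> dist y (x + v)"
      by (intro infdist_le) auto
    also have "dist y (x + v) = norm (v - (y - x))"
      by (simp add: dist_norm norm_minus_commute algebra_simps)
    finally show ?thesis using v_close by (simp add: norm_minus_commute)
  qed
  with \<open>\<delta> > 0\<close> show "\<exists>\<delta>>0. \<forall>x\<in>X. \<forall>y\<in>X. dist x xbar < \<delta> \<and> dist y xbar < \<delta> \<longrightarrow>
      infdist y ((\<lambda>v. x + v) ` tangent_cone X x) \<le> \<epsilon> * norm (x - y)"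
    by blast
qed

end

theorem theorem8p2:
  fixes X :: "'a::euclidean_space set" and xbar :: 'a
  assumes "xbar \<in> X"
    and "amenable TYPE('b::euclidean_space) X xbar"
  shows "nearly_convex X xbar \<and> nearly_radial X xbar"
proof -
  obtain V and F :: "'a \<Rightarrow> 'b" and F' and D where
    "open V \<and> xbar \<in> V \<and>
        (\<forall>x\<in>V. (F has_derivative blinfun_apply (F' x)) (at x)) \<and> continuous_on V F' \<and>
        closed D \<and> convex D \<and> X \<inter> V = {x\<in>V. F x \<in> D} \<and>
        (\<forall>w. w \<in> normal_cone_convex D (F xbar) \<and> (\<forall>h. inner w (F' xbar h) = 0) \<longrightarrow> w = 0)"
    using assms(2) unfolding amenable_def by blast
  then interpret amenable_representation X xbar V F F' D
    using assms(1) by unfold_locales blast+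
  show ?thesis
    using nearly_convex_at_xbar nearly_convex_imp_nearly_radial[OF assms(1)] by blast
qed

end
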